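(* Let $q$ and $d$ be positive integers and let $\mathcal{D}=\{(b_1,B_1),\ldots,(b_d,B_d)\}\subseteq [q]\times 2^{[q]}$ with $|B_i|\ge 2$ for all $i\in[d]$. Then ${\sf Div}(\mathcal{E}_{\mathcal{D}})=\overline{\mathcal{D}}$, where ${\sf Div}(\mathcal{E}_{\mathcal{D}})$ is computed with respect to the generators $\varepsilon_{\mathcal{D},1},\ldots,\varepsilon_{\mathcal{D},q}$ in this order. That is, the divisibility relations satisfied by the generators of $\mathcal{E}_{\mathcal{D}}$ are exactly the relations that can be deduced from $\mathcal{D}$.
   Context: Divisibility relations. Let $\Lambda$ be a finite nonempty set and $U=\{u_i:i\in\Lambda\}$ a set of monomials in a polynomial ring over a field, indexed so that $u_i=u_j$ implies $i=j$. A divisibility relation on $U$ is a pair $(b,B)$ with $b\in\Lambda$ and $\emptyset\ne B\subseteq\Lambda$ such that $u_b\mid \mathrm{lcm}(u_i: i\in B)$; ${\sf Div}(U)$ is the set of all of them. A pair $(b,B)\in\Lambda\times 2^\Lambda$ is trivial if $b\in B$. The extensions of $(b,B)$ are $(b,B)^{\sf ex}=\{(b,C): B\subseteq C\subseteq \Lambda\}$. Define the binary operation $(b,B)\circ(c,C)=(b,(B\smallsetminus\{c\})\cup C)$ on $\Lambda\times 2^\Lambda$ (it is neither commutative nor associative). For $\mathcal{D}\subseteq\Lambda\times 2^\Lambda$: $\mathcal{D}^\circ$ is the set of all compositions $(b_1,B_1)\circ\cdots\circ(b_s,B_s)$ with $s\ge1$, $(b_i,B_i)\in\mathcal{D}$,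 taken with every possible bracketing; $\mathcal{D}^{\sf ex}=\bigcup_{(b,B)\in\mathcal{D}}(b,B)^{\sf ex}$; $\Lambda^{\sf triv}=\{(b,B)\in\Lambda\times 2^\Lambda: b\in B\}$; and $\overline{\mathcal{D}}=(\mathcal{D}^\circ)^{\sf ex}\cup\Lambda^{\sf triv}$. Here $\Lambda=[q]$. $\mathcal{D}$-extremal ideals. Let $\mathsf k$ be a field and $S_{[q]}=\mathsf k[y_A:\emptyset\ne A\subseteq[q]]$. For $\mathcal{D}\subseteq [q]\times(2^{[q]}\smallsetminus\{\emptyset\})$ let $Q(\mathcal{D})=\{A\subseteq[q]: A\ne\emptyset,\ A\cap B\ne\emptyset \text{ for all }(b,B)\in\mathcal{D}\text{ with } b\in A\}$, let $\varepsilon_{\mathcal{D},i}=\prod_{A\in Q(\mathcal{D}),\, i\in A} y_A$ for $i\in[q]$, and let $\mathcal{E}_{\mathcal{D}}=(\varepsilon_{\mathcal{D},1},\ldots,\varepsilon_{\mathcal{D},q})\subseteq S_{[q]}$. ${\sf Div}(\mathcal{E}_{\mathcal{D}})$ denotes ${\sf Div}(\{\varepsilon_{\mathcal{D},1},\ldots,\varepsilon_{\mathcal{D},q}\})$ with indexing set $[q]$. *)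

theory Defs
  imports Main
begin

text \<open>Monomials are represented by their exponent vectors: a monomial in variables
of type 'v is a function 'v \<Rightarrow> nat (with finite support).\<close>

type_synonym 'v monomial = "'v \<Rightarrow> nat"

definition mono_dvd :: "'v monomial \<Rightarrow> 'v monomial \<Rightarrow> bool" where
  "mono_dvd u w \<longleftrightarrow> (\<forall>v. u v \<le> w v)"

definition mono_lcm :: "('i \<Rightarrow> 'v monomial) \<Rightarrow> 'i set \<Rightarrow> 'v monomial" where
  "mono_lcm u B = (\<lambda>v. Max ((\<lambda>i. u i v) ` B))"

definition Div :: "'i set \<Rightarrow> ('i \<Rightarrow> 'v monomial) \<Rightarrow> ('i \<times> 'i set) set" where
  "Div \<Lambda> u = {(b, B). b \<in> \<Lambda> \<and> B \<noteq> {} \<and> B \<subseteq> \<Lambda> \<and> mono_dvd (u b) (mono_lcm u B)}"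

definition comp_rel :: "'i \<times> 'i set \<Rightarrow> 'i \<times> 'i set \<Rightarrow> 'i \<times> 'i set" (infixl "\<circ>\<^sub>r" 70) where
  "comp_rel x y = (fst x, (snd x - {fst y}) \<union> snd y)"

inductive_set comp_closure :: "('i \<times> 'i set) set \<Rightarrow> ('i \<times> 'i set) set" for D where
  base: "x \<in> D \<Longrightarrow> x \<in> comp_closure D"
| comp: "x \<in> comp_closure D \<Longrightarrow> y \<in> comp_closure D \<Longrightarrow> comp_rel x y \<in> comp_closure D"

definition ext_rel :: "'i set \<Rightarrow> ('i \<times> 'i set) set \<Rightarrow> ('i \<times> 'i set) set" where
  "ext_rel \<Lambda> D = {(b, C). \<exists>B. (b, B) \<in> D \<and> B \<subseteq> C \<and> C \<subseteq> \<Lambda>}"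

definition triv_rel :: "'i set \<Rightarrow> ('i \<times> 'i set) set" where
  "triv_rel \<Lambda> = {(b, B). b \<in> \<Lambda> \<and> B \<subseteq> \<Lambda> \<and> b \<in> B}"

definition rel_closure :: "'i set \<Rightarrow> ('i \<times> 'i set) set \<Rightarrow> ('i \<times> 'i set) set" where
  "rel_closure \<Lambda> D = ext_rel \<Lambda> (comp_closure D) \<union> triv_rel \<Lambda>"

text \<open>D-extremal ideals. Variables y_A are indexed by sets A (nonempty subsets of [q]).\<close>
definition QD :: "nat \<Rightarrow> (nat \<times> nat set) set \<Rightarrow> nat set set" where
  "QD q D = {A. A \<noteq> {} \<and> A \<subseteq> {1..q} \<and> (\<forall>(b, B) \<in> D. b \<in> A \<longrightarrow> A \<inter> B \<noteq> {})}"

definition eps :: "nat \<Rightarrow> (nat \<times> nat set) set \<Rightarrow> nat \<Rightarrow> nat set monomial" where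
  "eps q D i = (\<lambda>A. if A \<in> QD q D \<and> i \<in> A then 1 else 0)"

end

theory Submission
  imports Defs
begin

text \<open>As \<open>\<epsilon>\<^sub>b\<close> is the squarefree product of the \<open>y\<^sub>A\<close> with \<open>b \<in> A \<in> Q(D)\<close>, \<open>\<epsilon>\<^sub>b\<close> divides
  \<open>lcm(\<epsilon>\<^sub>i : i \<in> B)\<close> exactly when every \<open>A \<in> Q(D)\<close> containing \<open>b\<close> meets \<open>B\<close>.
  This hitting property holds for the members of \<open>D\<close> by the definition of \<open>Q(D)\<close>, is
  preserved by composition and extension, and is trivial when \<open>b \<in> B\<close>. Conversely, if
  \<open>b \<notin> B\<close> cannot be derived from any subset of \<open>B\<close>, then the set of indices that neither
  lie in \<open>B\<close> nor are derivable from a subset of \<open>B\<close> belongs to \<open>Q(D)\<close>, contains \<open>b\<close> and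
  misses \<open>B\<close>.\<close>

definition hits_QD :: "nat \<Rightarrow> (nat \<times> nat set) set \<Rightarrow> nat \<Rightarrow> nat set \<Rightarrow> bool" where
  "hits_QD q D b B \<longleftrightarrow> (\<forall>A\<in>QD q D. b \<in> A \<longrightarrow> A \<inter> B \<noteq> {})"

lemma hits_QD_mono: "hits_QD q D b B \<Longrightarrow> B \<subseteq> C \<Longrightarrow> hits_QD q D b C"
  unfolding hits_QD_def by blast

lemma hits_QD_trivial: "b \<in> B \<Longrightarrow> hits_QD q D b B"
  unfolding hits_QD_def by blast

lemma mono_dvd_eps_lcm_iff:
  assumes "finite B" "B \<noteq> {}"
  shows "mono_dvd (eps q D b) (mono_lcm (eps q D) B) \<longleftrightarrow> hits_QD q D b B"
proof -
  have "eps q D b A \<le> Max ((\<lambda>i. eps q D i A) ` B) \<longleftrightarrow> (A \<in> QD q D \<longrightarrow> b \<in> A \<longrightarrow> A \<inter> B \<noteq> {})"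
    for A
  proof (cases "A \<in> QD q D \<and> b \<in> A")
    case True
    then have "eps q D b A = 1" by (simp add: eps_def)
    moreover have "(1::nat) \<le> Max ((\<lambda>i. eps q D i A) ` B) \<longleftrightarrow> (\<exists>i\<in>B. 1 \<le> eps q D i A)"
      using assms by (simp add: Max_ge_iff)
    ultimately show ?thesis using True by (auto simp: eps_def)
  next
    case False
    then have "eps q D b A = 0" by (simp add: eps_def)
    with False show ?thesis by simp
  qed
  then show ?thesis unfolding mono_dvd_def mono_lcm_def hits_QD_def by auto
qed

lemma Div_eps_eq:
  "Div {1..q} (eps q D) = {(b, B). b \<in> {1..q} \<and> B \<noteq> {} \<and> B \<subseteq> {1..q} \<and> hits_QD q D b B}"
  unfolding Div_def using mono_dvd_eps_lcm_iff finite_subset[of _ "{1..q}"] by blast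

lemma hits_QD_comp_rel:
  assumes "hits_QD q D b B" "hits_QD q D c C"
  shows "hits_QD q D b ((B - {c}) \<union> C)"
  unfolding hits_QD_def
proof (intro ballI impI)
  fix A assume "A \<in> QD q D" "b \<in> A"
  with assms(1) have "A \<inter> B \<noteq> {}" by (simp add: hits_QD_def)
  then consider "A \<inter> (B - {c}) \<noteq> {}" | "c \<in> A" by blast
  then show "A \<inter> ((B - {c}) \<union> C) \<noteq> {}"
  proof cases
    case 2
    with assms(2) \<open>A \<in> QD q D\<close> show ?thesis by (auto simp: hits_QD_def)
  qed blast
qed

lemma comp_closure_hits_QD:
  assumes "(b, B) \<in> comp_closure D"
  shows "hits_QD q D b B"
proof -
  have "hits_QD q D (fst x) (snd x)" if "x \<in> comp_closure D" for x
    using that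
  proof induction
    case (base x)
    then show ?case by (auto simp: hits_QD_def QD_def)
  next
    case (comp x y)
    then show ?case by (simp add: comp_rel_def hits_QD_comp_rel)
  qed
  from this[OF assms] show ?thesis by simp
qed

lemma comp_closure_subset:
  assumes "D \<subseteq> \<Lambda> \<times> {B. B \<noteq> {} \<and> B \<subseteq> \<Lambda>}"
  shows "comp_closure D \<subseteq> \<Lambda> \<times> {B. B \<noteq> {} \<and> B \<subseteq> \<Lambda>}"
proof
  fix x assume "x \<in> comp_closure D"
  then show "x \<in> \<Lambda> \<times> {B. B \<noteq> {} \<and> B \<subseteq> \<Lambda>}"
    by induction (use assms in \<open>auto simp: comp_rel_def\<close>)
qed

lemma comp_closure_compose_set:
  assumes "finite S" "(b, B\<^sub>0) \<in> comp_closure D"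
    and "\<forall>c\<in>S. \<exists>C\<subseteq>B. (c, C) \<in> comp_closure D"
  shows "\<exists>B'. (b, B') \<in> comp_closure D \<and> B' \<subseteq> (B\<^sub>0 - S) \<union> B"
  using assms
proof (induction S rule: finite_induct)
  case empty
  then show ?case by auto
next
  case (insert c S)
  then obtain B' where B': "(b, B') \<in> comp_closure D" "B' \<subseteq> (B\<^sub>0 - S) \<union> B" by auto
  obtain C where C: "C \<subseteq> B" "(c, C) \<in> comp_closure D" using insert.prems by auto
  have "(b, (B' - {c}) \<union> C) \<in> comp_closure D"
    using comp_closure.comp[OF B'(1) C(2)] by (simp add: comp_rel_def)
  with B' C show ?case by blast
qed

lemma hits_QD_imp_comp_closure:
  assumes D: "D \<subseteq> {1..q} \<times> Pow {1..q}"
    and b: "b \<in> {1..q}" "b \<notin> B" and hits: "hits_QD q D b B"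
  shows "\<exists>C\<subseteq>B. (b, C) \<in> comp_closure D"
proof -
  define X where "X = B \<union> {c. \<exists>C\<subseteq>B. (c, C) \<in> comp_closure D}"
  have "b \<in> X"
  proof (rule ccontr)
    assume "b \<notin> X"
    define A where "A = {1..q} - X"
    have A: "A \<noteq> {}" "A \<subseteq> {1..q}" "b \<in> A" "A \<inter> B = {}"
      using \<open>b \<notin> X\<close> b by (auto simp: A_def X_def)
    with hits have "A \<notin> QD q D" unfolding hits_QD_def by blast
    then obtain b\<^sub>1 B\<^sub>1 where d: "(b\<^sub>1, B\<^sub>1) \<in> D" "b\<^sub>1 \<in> A" "A \<inter> B\<^sub>1 = {}"
      using A unfolding QD_def by auto
    with D have "B\<^sub>1 \<subseteq> {1..q}" by blast
    with d(3) have covered: "\<forall>c\<in>B\<^sub>1 - B. \<exists>C\<subseteq>B. (c, C) \<in> comp_closure D"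
      by (auto simp: A_def X_def)
    have "finite (B\<^sub>1 - B)"
      using \<open>B\<^sub>1 \<subseteq> {1..q}\<close> by (simp add: finite_subset)
    from comp_closure_compose_set[OF this comp_closure.base[OF d(1)] covered]
    obtain B' where "(b\<^sub>1, B') \<in> comp_closure D" "B' \<subseteq> B"
      by blast
    then have "b\<^sub>1 \<in> X" unfolding X_def by auto
    with d(2) show False by (simp add: A_def)
  qed
  with b(2) show ?thesis unfolding X_def by blast
qed

lemma rel_closure_subset_Div_eps:
  assumes "D \<subseteq> {1..q} \<times> {B. B \<noteq> {} \<and> B \<subseteq> {1..q}}"
  shows "rel_closure {1..q} D \<subseteq> Div {1..q} (eps q D)"
proof
  fix x assume "x \<in> rel_closure {1..q} D"
  then obtain b C where x: "x = (b, C)" and "C \<subseteq> {1..q}"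
    and "b \<in> {1..q} \<and> b \<in> C \<or> (\<exists>B. (b, B) \<in> comp_closure D \<and> B \<subseteq> C)"
    unfolding rel_closure_def ext_rel_def triv_rel_def by blast
  moreover have "b \<in> {1..q} \<and> C \<noteq> {} \<and> hits_QD q D b C"
    if "(b, B) \<in> comp_closure D" "B \<subseteq> C" for B
    using that comp_closure_subset[OF assms] comp_closure_hits_QD hits_QD_mono by blast
  ultimately show "x \<in> Div {1..q} (eps q D)"
    unfolding Div_eps_eq using hits_QD_trivial by blast
qed

lemma Div_eps_subset_rel_closure:
  assumes "D \<subseteq> {1..q} \<times> Pow {1..q}"
  shows "Div {1..q} (eps q D) \<subseteq> rel_closure {1..q} D"
proof
  fix x assume "x \<in> Div {1..q} (eps q D)"
  then obtain b B where x: "x = (b, B)"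
    and b: "b \<in> {1..q}" and B: "B \<subseteq> {1..q}" and hits: "hits_QD q D b B"
    unfolding Div_eps_eq by blast
  show "x \<in> rel_closure {1..q} D"
  proof (cases "b \<in> B")
    case True
    with x b B show ?thesis unfolding rel_closure_def triv_rel_def by blast
  next
    case False
    with hits_QD_imp_comp_closure[OF assms b False hits] x B show ?thesis
      unfolding rel_closure_def ext_rel_def by blast
  qed
qed

theorem theorem3p4:
  fixes q :: nat and D :: "(nat \<times> nat set) set"
  assumes "q > 0"
    and "finite D" and "D \<noteq> {}"
    and "D \<subseteq> {1..q} \<times> Pow {1..q}"
    and "\<forall>(b, B) \<in> D. card B \<ge> 2"
  shows "Div {1..q} (eps q D) = rel_closure {1..q} D"
proof
  have "D \<subseteq> {1..q} \<times> {B. B \<noteq> {} \<and> B \<subseteq> {1..q}}"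
    using assms(4,5) by fastforce
  then show "rel_closure {1..q} D \<subseteq> Div {1..q} (eps q D)"
    by (rule rel_closure_subset_Div_eps)
  show "Div {1..q} (eps q D) \<subseteq> rel_closure {1..q} D"
    using assms(4) by (rule Div_eps_subset_rel_closure)
qed

end
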